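(* Let $g$ solve system (S3) with initial data $h_{ii}>0$ satisfying $4h_{11}<h_{22}=h_{33}$. Then the solution exists for all $t\ge 0$, $g_{22}=g_{33}$ for all $t$, $g_{22}$ and $g_{33}$ are increasing, and as $t\to\infty$: $g_{00}\to0$, $g_{11}\to0$, $g_{22},g_{33}\to\infty$. Moreover $(g_{00}g_{22}^3 - 4\det h)\,g_{00}^3g_{22} = \kappa$ for all $t$, where $\kappa = (h_{00}h_{22}^3-4\det h)\,h_{00}^3h_{22}$.
   Context: Let $\det h = h_{00}h_{11}h_{22}h_{33}$, $\beta=\frac{1}{6(\det h)^2}$, and $p(x,y,z) = x^4 - x^3(y+z) + x^2yz + x(-y^3+y^2z+yz^2-z^3) + y^4 - y^3z - yz^3 + z^4$, $q(x,y,z) = 5x^4 - 3x^3(y+z) + x^2yz + x(y^3-y^2z-yz^2+z^3) - 3y^4 + 3y^3z + 3yz^3 - 3z^4$. System (S3): $\dot g_{00} = -\beta\,p(g_{11},g_{22},g_{33})\,g_{00}^3$, $\dot g_{11} = -\beta\,q(g_{11},g_{22},g_{33})\,g_{00}^2g_{11}$, $\dot g_{22} = -\beta\,q(g_{22},g_{33},g_{11})\,g_{00}^2g_{22}$, $\dot g_{33} = -\beta\,q(g_{33},g_{11},g_{22})\,g_{00}^2g_{33}$, $g_{ii}(0)=h_{ii}$. This is Bach flow on $\mathbb{R}\times\mathbb{S}^3$ in a diagonalizing left-invariant frame with $[e_i,e_j]=\sum_k\varepsilon_{ijk}e_k$; along the flow $g_{00}g_{11}g_{22}g_{33}=\det h$.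 *)

theory Defs
  imports "HOL-Analysis.Analysis"
begin

definition pS3 :: "real \<Rightarrow> real \<Rightarrow> real \<Rightarrow> real" where
  "pS3 x y z = x^4 - x^3*(y+z) + x^2*y*z + x*(-(y^3) + y^2*z + y*z^2 - z^3)
              + y^4 - y^3*z - y*z^3 + z^4"

definition qS3 :: "real \<Rightarrow> real \<Rightarrow> real \<Rightarrow> real" where
  "qS3 x y z = 5*x^4 - 3*x^3*(y+z) + x^2*y*z + x*(y^3 - y^2*z - y*z^2 + z^3)
              - 3*y^4 + 3*y^3*z + 3*y*z^3 - 3*z^4"

definition detS3 :: "real \<Rightarrow> real \<Rightarrow> real \<Rightarrow> real \<Rightarrow> real" where
  "detS3 h0 h1 h2 h3 = h0*h1*h2*h3"

definition betaS3 :: "real \<Rightarrow> real \<Rightarrow> real \<Rightarrow> real \<Rightarrow> real" where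
  "betaS3 h0 h1 h2 h3 = 1 / (6 * (detS3 h0 h1 h2 h3)^2)"

definition S3_global_solution ::
  "real \<Rightarrow> real \<Rightarrow> real \<Rightarrow> real \<Rightarrow>
   (real \<Rightarrow> real) \<Rightarrow> (real \<Rightarrow> real) \<Rightarrow> (real \<Rightarrow> real) \<Rightarrow> (real \<Rightarrow> real) \<Rightarrow> bool" where
  "S3_global_solution h0 h1 h2 h3 g0 g1 g2 g3 \<longleftrightarrow>
     g0 0 = h0 \<and> g1 0 = h1 \<and> g2 0 = h2 \<and> g3 0 = h3 \<and>
     (\<forall>t\<ge>0.
        (g0 has_real_derivative
           (- betaS3 h0 h1 h2 h3 * pS3 (g1 t) (g2 t) (g3 t) * (g0 t)^3)) (at t within {0..}) \<and>
        (g1 has_real_derivative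
           (- betaS3 h0 h1 h2 h3 * qS3 (g1 t) (g2 t) (g3 t) * (g0 t)^2 * g1 t)) (at t within {0..}) \<and>
        (g2 has_real_derivative
           (- betaS3 h0 h1 h2 h3 * qS3 (g2 t) (g3 t) (g1 t) * (g0 t)^2 * g2 t)) (at t within {0..}) \<and>
        (g3 has_real_derivative
           (- betaS3 h0 h1 h2 h3 * qS3 (g3 t) (g1 t) (g2 t) * (g0 t)^2 * g3 t)) (at t within {0..}))"

end

theory Submission
  imports Defs
begin

text \<open>The volume \<open>g0 g1 g2 g3\<close> is conserved, so all components stay positive.  If
  \<open>h2 = h3\<close>, then \<open>g2 - g3\<close> solves a linear equation with zero initial value, so
  \<open>g2 = g3\<close> throughout.  On such symmetric solutions \<open>g0\<^sup>4 g2\<^sup>3 (g2 - 4 g1)\<close> is a second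
  first integral; when \<open>4 h1 < h2\<close> it is positive, which keeps \<open>4 g1 < g2\<close>, makes \<open>g2\<close>
  increasing with \<open>(g2\<^sup>2)' \<ge> 1/16\<close>, and then the two invariants force \<open>g1\<close> and \<open>g0\<close> to
  decay.  For existence, the invariants reduce the flow to a scalar autonomous equation for
  \<open>u\<close> with \<open>u\<^sup>4 = 1 - 4 g1 / g2\<close>, which is solved globally by inverting its time integral.\<close>

lemma DERIV_atLeast_imp_DERIV_at:
  fixes f :: "real \<Rightarrow> real"
  assumes "a < t" "(f has_real_derivative D) (at t within {a..})"
  shows "(f has_real_derivative D) (at t)"
proof -
  have "at t within {a..} = at t" by (rule at_within_interior) (use assms(1) in simp)
  then show ?thesis using assms(2) by simp
qed

lemma DERIV_zero_imp_constant_atLeast: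
  fixes f :: "real \<Rightarrow> real"
  assumes "\<And>t. 0 \<le> t \<Longrightarrow> (f has_real_derivative 0) (at t within {0..})" "0 \<le> t"
  shows "f t = f 0"
proof -
  have "\<exists>c. \<forall>x\<in>{0::real..}. f x = c"
    by (rule has_field_derivative_zero_constant) (auto intro: assms(1))
  then show ?thesis using assms(2) by force
qed

lemma DERIV_pos_imp_strict_mono_on_atLeast:
  fixes f f' :: "real \<Rightarrow> real"
  assumes f': "\<And>t. 0 \<le> t \<Longrightarrow> (f has_real_derivative f' t) (at t within {0..})"
    and pos: "\<And>t. 0 < t \<Longrightarrow> 0 < f' t"
  shows "strict_mono_on {0..} f"
proof (rule strict_mono_onI)
  fix s t :: real assume "s \<in> {0..}" "t \<in> {0..}" "s < t"
  moreover have "continuous_on {s..t} f"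
    by (rule continuous_on_subset[OF DERIV_continuous_on[of "{0..}"]]) (use f' \<open>s \<in> {0..}\<close> in auto)
  ultimately show "f s < f t"
  proof (intro DERIV_pos_imp_increasing_open[of s t f])
    fix x assume "s \<in> {0..}" "s < x"
    then have "0 < x" by simp
    then show "\<exists>y. (f has_real_derivative y) (at x) \<and> 0 < y"
      using DERIV_atLeast_imp_DERIV_at[OF _ f'[of x]] pos[of x] by auto
  qed
qed

lemma DERIV_nonneg_imp_mono_on_atLeast:
  fixes f f' :: "real \<Rightarrow> real"
  assumes f': "\<And>t. 0 \<le> t \<Longrightarrow> (f has_real_derivative f' t) (at t within {0..})"
    and nonneg: "\<And>t. 0 < t \<Longrightarrow> 0 \<le> f' t"
  shows "mono_on {0..} f"
proof (rule mono_onI)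
  fix s t :: real assume "s \<in> {0..}" "t \<in> {0..}" "s \<le> t"
  moreover have "continuous_on {s..t} f"
    by (rule continuous_on_subset[OF DERIV_continuous_on[of "{0..}"]]) (use f' \<open>s \<in> {0..}\<close> in auto)
  ultimately show "f s \<le> f t"
  proof (intro DERIV_nonneg_imp_increasing_open[of s t f])
    fix x assume "s \<in> {0..}" "s < x"
    then have "0 < x" by simp
    then show "\<exists>y. (f has_real_derivative y) (at x) \<and> 0 \<le> y"
      using DERIV_atLeast_imp_DERIV_at[OF _ f'[of x]] nonneg[of x] by auto
  qed
qed

lemma continuous_nonvanishing_imp_pos:
  fixes g :: "real \<Rightarrow> real"
  assumes "continuous_on {0..} g" "0 < g 0" "\<And>t. 0 \<le> t \<Longrightarrow> g t \<noteq> 0" "0 \<le> t"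
  shows "0 < g t"
proof (rule ccontr)
  assume "\<not> 0 < g t"
  moreover have "continuous_on {0..t} g" using assms(1) by (rule continuous_on_subset) auto
  ultimately obtain s where "0 \<le> s" "g s = 0"
    using IVT2'[of g t 0 0] assms(2,4) by auto
  with assms(3) show False by blast
qed

text \<open>Gronwall: the weight \<open>exp (-2 M t)\<close>, with \<open>M\<close> bounding \<open>\<bar>c\<bar>\<close> on \<open>[0, T]\<close>,
  makes \<open>d\<^sup>2\<close> non-increasing there.\<close>
lemma linear_ODE_zero_init_imp_zero:
  fixes d c :: "real \<Rightarrow> real"
  assumes d0: "d 0 = 0"
    and d': "\<And>t. 0 \<le> t \<Longrightarrow> (d has_real_derivative c t * d t) (at t within {0..})"
    and c: "continuous_on {0..} c" and T: "0 \<le> T"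
  shows "d T = 0"
proof -
  have "bounded (c ` {0..T})"
    by (intro compact_imp_bounded compact_continuous_image continuous_on_subset[OF c]) auto
  then obtain M where M: "\<forall>t\<in>{0..T}. \<bar>c t\<bar> \<le> M"
    unfolding bounded_iff by auto
  define f where "f t = (d t)^2 * exp (-2*M*t)" for t
  have f_cont: "continuous_on {0..T} f" unfolding f_def
    by (intro continuous_intros continuous_on_subset[OF DERIV_continuous_on[OF d']]) auto
  have "f T \<le> f 0"
  proof (rule DERIV_nonpos_imp_decreasing_open[OF T _ f_cont])
    fix x assume x: "0 < x" "x < T"
    have dx: "(d has_real_derivative c x * d x) (at x)"
      using DERIV_atLeast_imp_DERIV_at[OF x(1) d'] x by simp
    have "(f has_real_derivative 2 * (d x)^2 * exp (-2*M*x) * (c x - M)) (at x)"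
      unfolding f_def
      by (rule derivative_eq_intros dx refl)+
         (simp add: algebra_simps power2_eq_square)
    moreover have "2 * (d x)^2 * exp (-2*M*x) * (c x - M) \<le> 0"
      using M[rule_format, of x] x by (intro mult_nonneg_nonpos) auto
    ultimately show "\<exists>y. (f has_real_derivative y) (at x) \<and> y \<le> 0" by blast
  qed
  then show "d T = 0" using d0 by (simp add: f_def mult_le_0_iff)
qed

lemma tendsto_zero_if_power_tendsto_zero:
  fixes f :: "'a \<Rightarrow> real"
  assumes "0 < n" "eventually (\<lambda>x. 0 \<le> f x) F" "((\<lambda>x. f x ^ n) \<longlongrightarrow> 0) F"
  shows "(f \<longlongrightarrow> 0) F"
proof -
  have "((\<lambda>x. root n (f x ^ n)) \<longlongrightarrow> 0) F"
    using tendsto_real_root[OF assms(3)] by simp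
  moreover have "eventually (\<lambda>x. root n (f x ^ n) = f x) F"
    using assms(2) by eventually_elim (simp add: real_root_power_cancel[OF assms(1)])
  ultimately show ?thesis by (rule Lim_transform_eventually)
qed

lemma DERIV_local_inverse:
  fixes T U :: "real \<Rightarrow> real"
  assumes UT: "\<And>z. a < z \<Longrightarrow> z < b \<Longrightarrow> U (T z) = z"
    and T_cont: "\<And>z. a < z \<Longrightarrow> z < b \<Longrightarrow> isCont T z"
    and TU: "\<And>y. c < y \<Longrightarrow> y < d \<Longrightarrow> T (U y) = y"
    and s: "c < s" "s < d" and Us: "a < U s" "U s < b"
    and T': "(T has_real_derivative D) (at (U s))" "D \<noteq> 0"
  shows "(U has_real_derivative inverse D) (at s)"
proof (rule DERIV_inverse_function[where f=T and a=c and b=d, OF T' s TU])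
  have "isCont U (T (U s))"
    by (rule isCont_inverse_function2[where f=T and g=U and x="U s" and a="(a + U s) / 2"
          and b="(U s + b) / 2"])
       (use UT T_cont Us in auto)
  then show "isCont U s" using TU s by simp
qed

lemma increasing_unbounded_inverse:
  fixes T :: "real \<Rightarrow> real"
  assumes T0: "T 0 = 0"
    and T_less: "\<And>v w. 0 \<le> v \<Longrightarrow> v < w \<Longrightarrow> w < 1 \<Longrightarrow> T v < T w"
    and T_cont: "\<And>b. 0 \<le> b \<Longrightarrow> b < 1 \<Longrightarrow> continuous_on {0..b} T"
    and T_unbounded: "\<And>s. 0 \<le> s \<Longrightarrow> \<exists>v. 0 \<le> v \<and> v < 1 \<and> s \<le> T v"
  obtains U where "\<And>s. 0 \<le> s \<Longrightarrow> 0 \<le> U s \<and> U s < 1 \<and> T (U s) = s"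
    "\<And>v. 0 \<le> v \<Longrightarrow> v < 1 \<Longrightarrow> U (T v) = v"
proof -
  have inj: "inj_on T {0..<1}"
    unfolding inj_on_def by (metis T_less atLeastLessThan_iff less_irrefl linorder_neqE_linordered_idom)
  have onto: "s \<in> T ` {0..<1}" if s: "0 \<le> s" for s
  proof -
    obtain v where "0 \<le> v" "v < 1" "s \<le> T v" using T_unbounded[OF s] by blast
    then obtain w where "0 \<le> w" "w \<le> v" "T w = s"
      using IVT'[of T 0 s v] T0 T_cont s by auto
    then show ?thesis using \<open>v < 1\<close> by auto
  qed
  show ?thesis
  proof (rule that[of "the_inv_into {0..<1} T"])
    show "0 \<le> the_inv_into {0..<1} T s \<and> the_inv_into {0..<1} T s < 1 \<and>
        T (the_inv_into {0..<1} T s) = s" if "0 \<le> s" for s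
      using the_inv_into_into[OF inj onto[OF that] order_refl] f_the_inv_into_f[OF inj onto[OF that]]
      by simp
    show "the_inv_into {0..<1} T (T v) = v" if "0 \<le> v" "v < 1" for v
      using the_inv_into_f_f[OF inj] that by simp
  qed
qed

lemma inverse_antiderivative_solves_ODE:
  fixes T f :: "real \<Rightarrow> real" and u0 :: real
  assumes T0: "T 0 = 0"
    and T': "\<And>v. 0 < v \<Longrightarrow> v < 1 \<Longrightarrow> (T has_real_derivative 1 / f v) (at v)"
    and f_pos: "\<And>v. 0 < v \<Longrightarrow> v < 1 \<Longrightarrow> 0 < f v"
    and T_cont: "\<And>b. 0 \<le> b \<Longrightarrow> b < 1 \<Longrightarrow> continuous_on {0..b} T"
    and T_unbounded: "\<And>s. 0 \<le> s \<Longrightarrow> \<exists>v. 0 \<le> v \<and> v < 1 \<and> s \<le> T v"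
    and u0: "0 < u0" "u0 < 1"
  obtains u where "u 0 = u0"
    "\<And>t. 0 \<le> t \<Longrightarrow> 0 < u t \<and> u t < 1 \<and> (u has_real_derivative f (u t)) (at t)"
proof -
  have T_less: "T v < T w" if "0 \<le> v" "v < w" "w < 1" for v w
  proof (rule DERIV_pos_imp_increasing_open[OF \<open>v < w\<close>])
    show "continuous_on {v..w} T" by (rule continuous_on_subset[OF T_cont[of w]]) (use that in auto)
  next
    fix x assume "v < x" "x < w"
    then show "\<exists>y. (T has_real_derivative y) (at x) \<and> 0 < y"
      using T'[of x] f_pos[of x] that by (intro exI[of _ "1 / f x"]) auto
  qed
  then obtain U where U: "\<And>s. 0 \<le> s \<Longrightarrow> 0 \<le> U s \<and> U s < 1 \<and> T (U s) = s"
    and U_T: "\<And>v. 0 \<le> v \<Longrightarrow> v < 1 \<Longrightarrow> U (T v) = v"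
    using increasing_unbounded_inverse[OF T0 _ T_cont T_unbounded] by blast
  have U_pos: "0 < U s" if "0 < s" for s
    using U[of s] T0 that by (metis less_eq_real_def less_irrefl)
  have U': "(U has_real_derivative f (U s)) (at s)" if s: "0 < s" for s
  proof -
    have Us: "0 < U s" "U s < 1" using U_pos[OF s] U[of s] s by auto
    have "(U has_real_derivative inverse (1 / f (U s))) (at s)"
    proof (rule DERIV_local_inverse[where T=T and a=0 and b=1 and c=0 and d="s + 1"])
      show "U (T z) = z" if "0 < z" "z < 1" for z using U_T that by simp
      show "isCont T z" if "0 < z" "z < 1" for z using T'[THEN DERIV_isCont] that by blast
      show "T (U y) = y" if "0 < y" "y < s + 1" for y using U[of y] that by simp
      show "(T has_real_derivative 1 / f (U s)) (at (U s))" using T' Us by blast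
      show "1 / f (U s) \<noteq> 0" using f_pos[of "U s"] Us by simp
    qed (use s Us in auto)
    then show ?thesis by simp
  qed
  show ?thesis
  proof
    show "U (0 + T u0) = u0" using U_T u0 by simp
    fix t :: real assume "0 \<le> t"
    then have pos: "0 < t + T u0" using T_less[of 0 u0] T0 u0 by simp
    have "((\<lambda>t. U (t + T u0)) has_real_derivative f (U (t + T u0)) * 1) (at t)"
      by (rule DERIV_chain2[where f=U and g="\<lambda>t. t + T u0", OF U'[OF pos]]) (auto intro!: derivative_eq_intros)
    then show "0 < U (t + T u0) \<and> U (t + T u0) < 1 \<and>
        ((\<lambda>t. U (t + T u0)) has_real_derivative f (U (t + T u0))) (at t)"
      using U_pos[OF pos] U[of "t + T u0"] pos by simp
  qed
qed

text \<open>The solution is the inverse of \<open>T v = \<integral>\<^sub>0\<^sup>v 1 / f\<close>; the bound on \<open>f\<close> makes \<open>T\<close>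
  blow up at \<open>1\<close>, so the solution never reaches \<open>1\<close>.\<close>
lemma separable_ODE_global_solution:
  fixes f :: "real \<Rightarrow> real" and k u0 :: real
  assumes f_cont: "continuous_on {0..<1} f"
    and f_pos: "\<And>v. 0 \<le> v \<Longrightarrow> v < 1 \<Longrightarrow> 0 < f v"
    and f_bound: "\<And>v. 0 \<le> v \<Longrightarrow> v < 1 \<Longrightarrow> k * f v \<le> (1 - v)^2"
    and k: "0 < k" and u0: "0 < u0" "u0 < 1"
  obtains u where "u 0 = u0"
    "\<And>t. 0 \<le> t \<Longrightarrow> 0 < u t \<and> u t < 1 \<and> (u has_real_derivative f (u t)) (at t)"
proof -
  define T where "T v = integral {0..v} (\<lambda>w. 1 / f w)" for v
  have T'_within: "(T has_real_derivative 1 / f v) (at v within {0..b})"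
    if "0 \<le> b" "b < 1" "v \<in> {0..b}" for b v
    unfolding T_def
  proof (rule integral_has_real_derivative[OF _ that(3)])
    show "continuous_on {0..b} (\<lambda>w. 1 / f w)"
      using that f_pos by (intro continuous_intros continuous_on_subset[OF f_cont]) force+
  qed
  have T': "(T has_real_derivative 1 / f v) (at v)" if "0 < v" "v < 1" for v
  proof -
    have "at v within {0..(1 + v) / 2} = at v" by (rule at_within_interior) (use that in simp)
    then show ?thesis using T'_within[of "(1 + v) / 2" v] that by simp
  qed
  have T_cont: "continuous_on {0..b} T" if "0 \<le> b" "b < 1" for b
    using T'_within[OF that] by (rule DERIV_continuous_on)
  have T_lower: "k / (1 - v) - k \<le> T v" if v: "0 \<le> v" "v < 1" for v
  proof -
    have "T 0 - k / (1 - 0) \<le> T v - k / (1 - v)"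
    proof (rule DERIV_nonneg_imp_increasing_open[OF v(1)])
      fix x assume x: "0 < x" "x < v"
      have "((\<lambda>x. T x - k / (1 - x)) has_real_derivative 1 / f x - k / (1 - x)^2) (at x)"
        using x v by (auto intro!: derivative_eq_intros T' simp: power2_eq_square)
      moreover have "k / (1 - x)^2 \<le> 1 / f x"
        using f_bound[of x] f_pos[of x] x v by (simp add: divide_simps)
      ultimately show "\<exists>y. ((\<lambda>x. T x - k / (1 - x)) has_real_derivative y) (at x) \<and> 0 \<le> y"
        by force
    qed (use v in \<open>intro continuous_intros T_cont, auto\<close>)
    then show ?thesis by (simp add: T_def)
  qed
  show ?thesis
  proof (rule inverse_antiderivative_solves_ODE[OF _ T' _ T_cont _ u0])
    fix s :: real assume "0 \<le> s"
    then have "s \<le> T (s / (s + k))"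
      using T_lower[of "s / (s + k)"] k by (simp add: field_simps)
    then show "\<exists>v. 0 \<le> v \<and> v < 1 \<and> s \<le> T v"
      using \<open>0 \<le> s\<close> k by (intro exI[of _ "s / (s + k)"]) auto
  qed (use that f_pos in \<open>auto simp: T_def\<close>)
qed

lemma pS3_plus_cyclic_qS3: "pS3 x y z + qS3 x y z + qS3 y z x + qS3 z x y = 0"
  unfolding pS3_def qS3_def by algebra

lemma pS3_equal_last: "pS3 x y y = x^2 * (x - y)^2"
  unfolding pS3_def by algebra

lemma qS3_equal_last: "qS3 x y y = x^2 * (5*x - y) * (x - y)"
  unfolding qS3_def by algebra

lemma qS3_equal_first: "qS3 y y x = x^2 * (y - x) * (3*x - y)"
  unfolding qS3_def by algebra

lemma qS3_equal_outer: "qS3 y x y = x^2 * (y - x) * (3*x - y)"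
  unfolding qS3_def by algebra

locale S3_solution =
  fixes h0 h1 h2 h3 :: real and g0 g1 g2 g3 :: "real \<Rightarrow> real"
  assumes solution: "S3_global_solution h0 h1 h2 h3 g0 g1 g2 g3"
    and data_pos: "0 < h0" "0 < h1" "0 < h2" "0 < h3"
begin

abbreviation "\<beta> \<equiv> betaS3 h0 h1 h2 h3"

abbreviation "det_h \<equiv> detS3 h0 h1 h2 h3"

lemma initial_values: "g0 0 = h0" "g1 0 = h1" "g2 0 = h2" "g3 0 = h3"
  using solution unfolding S3_global_solution_def by auto

lemma DERIV_g0:
  "0 \<le> t \<Longrightarrow> (g0 has_real_derivative - \<beta> * pS3 (g1 t) (g2 t) (g3 t) * g0 t ^ 3) (at t within {0..})"
  using solution unfolding S3_global_solution_def by blast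

lemma DERIV_g1:
  "0 \<le> t \<Longrightarrow> (g1 has_real_derivative - \<beta> * qS3 (g1 t) (g2 t) (g3 t) * g0 t ^ 2 * g1 t) (at t within {0..})"
  using solution unfolding S3_global_solution_def by blast

lemma DERIV_g2:
  "0 \<le> t \<Longrightarrow> (g2 has_real_derivative - \<beta> * qS3 (g2 t) (g3 t) (g1 t) * g0 t ^ 2 * g2 t) (at t within {0..})"
  using solution unfolding S3_global_solution_def by blast

lemma DERIV_g3:
  "0 \<le> t \<Longrightarrow> (g3 has_real_derivative - \<beta> * qS3 (g3 t) (g1 t) (g2 t) * g0 t ^ 2 * g3 t) (at t within {0..})"
  using solution unfolding S3_global_solution_def by blast

lemma continuous_on_g:
  "continuous_on {0..} g0" "continuous_on {0..} g1" "continuous_on {0..} g2" "continuous_on {0..} g3"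
  using DERIV_g0 DERIV_g1 DERIV_g2 DERIV_g3 by (auto intro!: DERIV_continuous_on)

lemma volume_conserved: "0 \<le> t \<Longrightarrow> g0 t * g1 t * g2 t * g3 t = det_h"
proof -
  have "((\<lambda>t. g0 t * g1 t * g2 t * g3 t) has_real_derivative
      - \<beta> * g0 t ^ 3 * g1 t * g2 t * g3 t * (pS3 (g1 t) (g2 t) (g3 t) + qS3 (g1 t) (g2 t) (g3 t)
        + qS3 (g2 t) (g3 t) (g1 t) + qS3 (g3 t) (g1 t) (g2 t))) (at t within {0..})"
    if "0 \<le> t" for t
    by (rule derivative_eq_intros DERIV_g0 DERIV_g1 DERIV_g2 DERIV_g3 that refl)+ algebra
  then show "0 \<le> t \<Longrightarrow> g0 t * g1 t * g2 t * g3 t = det_h"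
    using DERIV_zero_imp_constant_atLeast[of "\<lambda>t. g0 t * g1 t * g2 t * g3 t"]
    by (simp add: pS3_plus_cyclic_qS3 initial_values detS3_def)
qed

lemma det_h_pos: "0 < det_h"
  using data_pos by (simp add: detS3_def)

lemma g_pos: "0 \<le> t \<Longrightarrow> 0 < g0 t" "0 \<le> t \<Longrightarrow> 0 < g1 t"
  "0 \<le> t \<Longrightarrow> 0 < g2 t" "0 \<le> t \<Longrightarrow> 0 < g3 t"
  using continuous_nonvanishing_imp_pos[OF continuous_on_g(1)]
    continuous_nonvanishing_imp_pos[OF continuous_on_g(2)]
    continuous_nonvanishing_imp_pos[OF continuous_on_g(3)]
    continuous_nonvanishing_imp_pos[OF continuous_on_g(4)]
    volume_conserved det_h_pos data_pos initial_values
  by (metis mult_eq_0_iff less_irrefl)+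

text \<open>\<open>g2 - g3\<close> solves a linear equation whose coefficient is a polynomial in the solution,
  hence vanishes when it does initially.\<close>
lemma g2_eq_g3_if_h2_eq_h3:
  assumes "h2 = h3" "0 \<le> t"
  shows "g2 t = g3 t"
proof -
  define A where "A x y z = 5*(y^4+y^3*z+y^2*z^2+y*z^3+z^4) - 3*x*(y+z)*(y^2+z^2)
    - 2*x*y*z*(y+z) - y^2*z^2 - x^2*y*z + x^3*(y+z) - 3*x^4" for x y z :: real
  have factor: "qS3 y z x * y - qS3 z x y * z = (y - z) * A x y z" for x y z
    unfolding qS3_def A_def by algebra
  have "(\<lambda>s. g2 s - g3 s) t = 0"
  proof (rule linear_ODE_zero_init_imp_zero[where d="\<lambda>s. g2 s - g3 s" and c="\<lambda>s. - \<beta> * g0 s ^ 2 * A (g1 s) (g2 s) (g3 s)"])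
    fix s :: real assume "0 \<le> s"
    have "(- \<beta> * qS3 (g2 s) (g3 s) (g1 s) * g0 s ^ 2 * g2 s) - (- \<beta> * qS3 (g3 s) (g1 s) (g2 s) * g0 s ^ 2 * g3 s)
        = - \<beta> * g0 s ^ 2 * A (g1 s) (g2 s) (g3 s) * (g2 s - g3 s)"
      using factor[of "g2 s" "g3 s" "g1 s"] by algebra
    then show "((\<lambda>s. g2 s - g3 s) has_real_derivative
        - \<beta> * g0 s ^ 2 * A (g1 s) (g2 s) (g3 s) * (g2 s - g3 s)) (at s within {0..})"
      using DERIV_diff[OF DERIV_g2 DERIV_g3, OF \<open>0 \<le> s\<close> \<open>0 \<le> s\<close>] by simp
  next
    show "continuous_on {0..} (\<lambda>s. - \<beta> * g0 s ^ 2 * A (g1 s) (g2 s) (g3 s))"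
      unfolding A_def by (intro continuous_intros continuous_on_g)
  qed (use assms initial_values in auto)
  then show ?thesis by simp
qed

end

locale S3_symmetric_solution = S3_solution + assumes h2_eq_h3: "h2 = h3"
begin

lemma g3_eq_g2: "0 \<le> t \<Longrightarrow> g3 t = g2 t"
  using g2_eq_g3_if_h2_eq_h3[OF h2_eq_h3] by simp

lemma det_h_eq: "det_h = h0 * h1 * h2^2"
  using h2_eq_h3 by (simp add: detS3_def power2_eq_square)

abbreviation "\<kappa> \<equiv> (h0 * h2^3 - 4 * det_h) * h0^3 * h2"

lemma kappa_eq: "\<kappa> = h0^4 * h2^3 * (h2 - 4 * h1)"
  unfolding det_h_eq by algebra

lemma volume_symmetric: "0 \<le> t \<Longrightarrow> g0 t * g1 t * g2 t ^ 2 = det_h"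
  using volume_conserved g3_eq_g2 by (simp add: power2_eq_square mult.assoc)

lemma DERIV_g0_symmetric:
  assumes "0 \<le> t"
  shows "(g0 has_real_derivative - \<beta> * g1 t^2 * (g1 t - g2 t)^2 * g0 t^3) (at t within {0..})"
  by (rule DERIV_cong[OF DERIV_g0[OF assms]]) (simp add: g3_eq_g2[OF assms] pS3_equal_last)

lemma DERIV_g1_symmetric:
  assumes "0 \<le> t"
  shows "(g1 has_real_derivative
    - \<beta> * g1 t^2 * (5 * g1 t - g2 t) * (g1 t - g2 t) * g0 t^2 * g1 t) (at t within {0..})"
  by (rule DERIV_cong[OF DERIV_g1[OF assms]]) (simp add: g3_eq_g2[OF assms] qS3_equal_last)

lemma DERIV_g2_symmetric:
  assumes "0 \<le> t"
  shows "(g2 has_real_derivative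
    \<beta> * g1 t^2 * (g2 t - g1 t) * (g2 t - 3 * g1 t) * g0 t^2 * g2 t) (at t within {0..})"
  by (rule DERIV_cong[OF DERIV_g2[OF assms]]) (simp add: g3_eq_g2[OF assms] qS3_equal_first algebra_simps)

lemma quartic_invariant: "0 \<le> t \<Longrightarrow> g0 t^4 * g2 t^3 * (g2 t - 4 * g1 t) = \<kappa>"
proof -
  have "((\<lambda>t. g0 t^4 * g2 t^3 * (g2 t - 4 * g1 t)) has_real_derivative 0) (at t within {0..})"
    if "0 \<le> t" for t
    by (rule derivative_eq_intros DERIV_g0_symmetric DERIV_g1_symmetric DERIV_g2_symmetric that refl)+
       (simp, algebra)
  then show "0 \<le> t \<Longrightarrow> g0 t^4 * g2 t^3 * (g2 t - 4 * g1 t) = \<kappa>"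
    using DERIV_zero_imp_constant_atLeast[of "\<lambda>t. g0 t^4 * g2 t^3 * (g2 t - 4 * g1 t)"]
    by (simp add: initial_values kappa_eq)
qed

lemma conserved_quantity:
  assumes "0 \<le> t"
  shows "(g0 t * g2 t^3 - 4 * det_h) * g0 t^3 * g2 t = \<kappa>"
  using quartic_invariant[OF assms] volume_symmetric[OF assms] by algebra

end

locale S3_expanding_solution = S3_symmetric_solution + assumes h1_small: "4 * h1 < h2"
begin

lemma kappa_pos: "0 < \<kappa>"
  using data_pos h1_small by (simp add: kappa_eq)

lemma four_g1_less_g2:
  assumes "0 \<le> t"
  shows "4 * g1 t < g2 t"
proof -
  have "0 < g0 t^4 * g2 t^3 * (g2 t - 4 * g1 t)"
    using quartic_invariant[OF assms] kappa_pos by simp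
  moreover have "0 < g0 t^4 * g2 t^3" using g_pos[OF assms] by simp
  ultimately show ?thesis using zero_less_mult_pos by fastforce
qed

lemma strict_mono_g2: "strict_mono_on {0..} g2"
proof (rule DERIV_pos_imp_strict_mono_on_atLeast[OF DERIV_g2_symmetric])
  fix t :: real assume "0 < t"
  then show "0 < \<beta> * g1 t^2 * (g2 t - g1 t) * (g2 t - 3 * g1 t) * g0 t^2 * g2 t"
    using four_g1_less_g2[of t] g_pos[of t] det_h_pos by (simp add: betaS3_def)
qed

lemma strict_mono_g3: "strict_mono_on {0..} g3"
  using strict_mono_g2 g3_eq_g2 unfolding strict_mono_on_def by simp

text \<open>Since \<open>\<beta> g0\<^sup>2 g1\<^sup>2 g2\<^sup>4 = 1/6\<close> by volume conservation,
  \<open>(g2\<^sup>2)' = (g2 - g1) (g2 - 3 g1) / (3 g2\<^sup>2)\<close>, which is at least \<open>1/16\<close> when \<open>4 g1 < g2\<close>.\<close>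
lemma g2_square_growth:
  assumes "0 \<le> t"
  shows "h2^2 + t / 16 \<le> g2 t^2"
proof -
  have "mono_on {0..} (\<lambda>t. g2 t^2 - t / 16)"
  proof (rule DERIV_nonneg_imp_mono_on_atLeast)
    fix t :: real assume "0 \<le> t"
    show "((\<lambda>t. g2 t^2 - t / 16) has_real_derivative
        2 * g2 t * (\<beta> * g1 t^2 * (g2 t - g1 t) * (g2 t - 3 * g1 t) * g0 t^2 * g2 t) - 1 / 16)
        (at t within {0..})"
      by (rule derivative_eq_intros DERIV_g2_symmetric[OF \<open>0 \<le> t\<close>] refl | simp)+
  next
    fix t :: real assume "0 < t"
    define x y where "x = g1 t" and "y = g2 t"
    have pos: "0 < x" "0 < y" "4 * x < y"
      using g_pos four_g1_less_g2 \<open>0 < t\<close> by (auto simp: x_def y_def)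
    have "g0 t^2 * x^2 * y^4 = det_h^2"
      unfolding volume_symmetric[OF less_imp_le[OF \<open>0 < t\<close>], symmetric] x_def y_def by algebra
    then have "\<beta> * (g0 t^2 * x^2 * y^4) = 1 / 6" using det_h_pos by (simp add: betaS3_def)
    then have "2 * y * (\<beta> * x^2 * (y - x) * (y - 3 * x) * g0 t^2 * y) * (3 * y^2)
        = (y - x) * (y - 3 * x)" by algebra
    also have "\<dots> \<ge> 1 / 16 * (3 * y^2)"
      using mult_nonneg_nonneg[of "y - 4 * x" "13 * y - 12 * x"] pos
      by (simp add: algebra_simps power2_eq_square)
    finally have "1 / 16 \<le> 2 * y * (\<beta> * x^2 * (y - x) * (y - 3 * x) * g0 t^2 * y)"
      by (rule mult_right_le_imp_le) (use pos in simp)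
    then show "0 \<le> 2 * g2 t * (\<beta> * g1 t^2 * (g2 t - g1 t) * (g2 t - 3 * g1 t) * g0 t^2 * g2 t) - 1 / 16"
      by (simp add: x_def y_def)
  qed
  from mono_onD[OF this, of 0 t] show ?thesis using assms by (simp add: initial_values)
qed

lemma g2_tendsto_at_top: "filterlim g2 at_top at_top"
  unfolding filterlim_at_top
proof
  fix Z :: real
  show "eventually (\<lambda>t. Z \<le> g2 t) at_top"
  proof (rule eventually_at_top_linorderI[of "16 * Z^2"])
    fix t assume t: "16 * Z^2 \<le> t"
    then have "0 \<le> t" using zero_le_power2[of Z] by linarith
    then have "Z^2 \<le> g2 t^2" using g2_square_growth[OF \<open>0 \<le> t\<close>] t zero_le_power2[of h2] by linarith
    then show "Z \<le> g2 t" by (rule power2_le_imp_le) (use g_pos(3)[OF \<open>0 \<le> t\<close>] in simp)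
  qed
qed

lemma g3_tendsto_at_top: "filterlim g3 at_top at_top"
proof -
  have "eventually (\<lambda>t. g2 t = g3 t) at_top"
    by (rule eventually_at_top_linorderI[of 0]) (simp add: g3_eq_g2)
  then show ?thesis using g2_tendsto_at_top filterlim_cong[OF refl refl] by blast
qed

lemma g1_tendsto_zero: "(g1 \<longlongrightarrow> 0) at_top"
proof (rule tendsto_zero_if_power_tendsto_zero[of 4])
  have bound: "g1 t^4 \<le> det_h^4 / \<kappa> / g2 t^4" if "0 \<le> t" for t
  proof -
    have "\<kappa> = g0 t^4 * g2 t^4 - 4 * g1 t * g0 t^4 * g2 t^3"
      using quartic_invariant[OF that] by algebra
    moreover have "0 \<le> 4 * g1 t * g0 t^4 * g2 t^3" using g_pos[OF that] by simp
    ultimately have "\<kappa> \<le> g0 t^4 * g2 t^4" by linarith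
    then have "\<kappa> * (g1 t^4 * g2 t^4) \<le> g0 t^4 * g2 t^4 * (g1 t^4 * g2 t^4)"
      by (rule mult_right_mono) simp
    also have "\<dots> = (g0 t * g1 t * g2 t^2)^4" by algebra
    finally have "g1 t^4 * (\<kappa> * g2 t^4) \<le> det_h^4"
      by (simp add: volume_symmetric[OF that] mult.commute mult.left_commute)
    moreover have "0 < \<kappa> * g2 t^4" using kappa_pos g_pos[OF that] by simp
    ultimately show ?thesis by (simp add: pos_le_divide_eq divide_divide_eq_left)
  qed
  have lim: "((\<lambda>t. det_h^4 / \<kappa> / g2 t^4) \<longlongrightarrow> 0) at_top"
    by (intro tendsto_divide_0[OF tendsto_const] filterlim_at_top_imp_at_infinity
        filterlim_pow_at_top g2_tendsto_at_top) simp
  have ev: "eventually (\<lambda>t. g1 t^4 \<le> det_h^4 / \<kappa> / g2 t^4) at_top"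
    by (rule eventually_at_top_linorderI[of 0]) (rule bound)
  show "((\<lambda>t. g1 t^4) \<longlongrightarrow> 0) at_top"
    by (rule tendsto_sandwich[OF _ ev tendsto_const lim]) simp
next
  show "eventually (\<lambda>t. 0 \<le> g1 t) at_top"
    by (rule eventually_at_top_linorderI[of 0]) (simp add: g_pos less_imp_le)
qed simp

lemma g0_tendsto_zero: "(g0 \<longlongrightarrow> 0) at_top"
proof (rule tendsto_zero_if_power_tendsto_zero[of 4])
  have "filterlim (\<lambda>t. - 4 * g1 t + g2 t) at_top at_top"
    by (rule filterlim_tendsto_add_at_top[OF _ g2_tendsto_at_top])
       (use tendsto_mult_right_zero[OF g1_tendsto_zero, of "- 4"] in simp)
  then have diff: "filterlim (\<lambda>t. g2 t - 4 * g1 t) at_top at_top" by simp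
  have "filterlim (\<lambda>t. g2 t^3 * (g2 t - 4 * g1 t)) at_top at_top"
    by (rule filterlim_at_top_mult_at_top[OF filterlim_pow_at_top[OF _ g2_tendsto_at_top] diff]) simp
  then have "((\<lambda>t. \<kappa> / (g2 t^3 * (g2 t - 4 * g1 t))) \<longlongrightarrow> 0) at_top"
    by (rule tendsto_divide_0[OF tendsto_const filterlim_at_top_imp_at_infinity])
  moreover have "eventually (\<lambda>t. \<kappa> / (g2 t^3 * (g2 t - 4 * g1 t)) = g0 t^4) at_top"
  proof (rule eventually_at_top_linorderI[of 0])
    fix t :: real assume "0 \<le> t"
    have "g2 t^3 * (g2 t - 4 * g1 t) \<noteq> 0"
      using g_pos[OF \<open>0 \<le> t\<close>] four_g1_less_g2[OF \<open>0 \<le> t\<close>] by simp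
    moreover have "\<kappa> = g0 t^4 * (g2 t^3 * (g2 t - 4 * g1 t))"
      using quartic_invariant[OF \<open>0 \<le> t\<close>] by (simp add: mult.assoc)
    ultimately show "\<kappa> / (g2 t^3 * (g2 t - 4 * g1 t)) = g0 t^4" by simp
  qed
  ultimately show "((\<lambda>t. g0 t^4) \<longlongrightarrow> 0) at_top" by (rule Lim_transform_eventually)
next
  show "eventually (\<lambda>t. 0 \<le> g0 t) at_top"
    by (rule eventually_at_top_linorderI[of 0]) (simp add: g_pos less_imp_le)
qed simp

end

text \<open>On symmetric solutions, the ratio \<open>R = g1 / g2\<close> and \<open>Y = g2\<close> obey the equations below, and
  \<open>g0\<close> is recovered from volume conservation.\<close>
lemma S3_global_solution_from_ratio:
  fixes R Y :: "real \<Rightarrow> real" and h0 h1 h2 :: real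
  assumes h: "0 < h0" "0 < h1" "0 < h2"
    and init: "R 0 * Y 0 = h1" "Y 0 = h2"
    and pos: "\<And>t. 0 \<le> t \<Longrightarrow> 0 < R t \<and> 0 < Y t"
    and R': "\<And>t. 0 \<le> t \<Longrightarrow>
      (R has_real_derivative - R t * (1 - R t) * (1 - 4 * R t) / (3 * Y t^2)) (at t within {0..})"
    and Y': "\<And>t. 0 \<le> t \<Longrightarrow>
      (Y has_real_derivative (1 - R t) * (1 - 3 * R t) / (6 * Y t)) (at t within {0..})"
  shows "S3_global_solution h0 h1 h2 h2
    (\<lambda>t. h0 * h1 * h2^2 / (R t * Y t^3)) (\<lambda>t. R t * Y t) Y Y"
proof -
  define D where "D = h0 * h1 * h2^2"
  have D: "0 < D" using h by (simp add: D_def)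
  have "betaS3 h0 h1 h2 h2 = 1 / (6 * D^2)"
    by (simp add: betaS3_def detS3_def D_def power2_eq_square mult_ac)
  moreover have "D / (R 0 * Y 0^3) = h0"
    using init h by (simp add: D_def field_simps power2_eq_square power3_eq_cube)
  moreover have "((\<lambda>t. D / (R t * Y t^3)) has_real_derivative
      - (1 / (6 * D^2)) * pS3 (R t * Y t) (Y t) (Y t) * (D / (R t * Y t^3))^3) (at t within {0..})"
    if t: "0 \<le> t" for t
    by (rule derivative_eq_intros R'[OF t] Y'[OF t] refl)+
       (use pos[OF t] D in \<open>simp_all add: pS3_equal_last field_simps power2_eq_square power3_eq_cube\<close>)
  moreover have "((\<lambda>t. R t * Y t) has_real_derivative
      - (1 / (6 * D^2)) * qS3 (R t * Y t) (Y t) (Y t) * (D / (R t * Y t^3))^2 * (R t * Y t))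
      (at t within {0..})"
    if t: "0 \<le> t" for t
    by (rule derivative_eq_intros R'[OF t] Y'[OF t] refl)+
       (use pos[OF t] D in \<open>auto simp: qS3_equal_last field_simps; algebra\<close>)
  moreover have "(Y has_real_derivative
      - (1 / (6 * D^2)) * qS3 (Y t) (Y t) (R t * Y t) * (D / (R t * Y t^3))^2 * Y t)
      (at t within {0..})"
    if t: "0 \<le> t" for t
    by (rule DERIV_cong[OF Y'[OF t]])
       (use pos[OF t] D in \<open>auto simp: qS3_equal_first field_simps; algebra\<close>)
  moreover have "qS3 (Y t) (R t * Y t) (Y t) = qS3 (Y t) (Y t) (R t * Y t)" for t
    by (simp add: qS3_equal_first qS3_equal_outer)
  ultimately show ?thesis
    unfolding S3_global_solution_def D_def[symmetric] using init by auto
qed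

text \<open>The conserved quantity forces \<open>Y\<^sup>8\<close> to be proportional to \<open>(1 - 4 R) / R\<^sup>4\<close>; writing
  \<open>1 - 4 R = u\<^sup>4\<close> turns the ratio equations into a single scalar equation for \<open>u\<close>.\<close>
lemma ratio_equations_from_quartic_parameter:
  fixes u R Y :: "real \<Rightarrow> real" and a t :: real
  assumes a: "0 < a" and u: "0 < u t" "u t < 1"
    and u': "(u has_real_derivative (1 - u t^4)^2 * (3 + u t^4) / (48 * a)) (at t)"
    and R_def: "R = (\<lambda>t. (1 - u t^4) / 4)" and Y_def: "Y = (\<lambda>t. sqrt (a * u t / (1 - u t^4)))"
  shows "0 < R t" "0 < Y t"
    "(R has_real_derivative - R t * (1 - R t) * (1 - 4 * R t) / (3 * Y t^2)) (at t)"
    "(Y has_real_derivative (1 - R t) * (1 - 3 * R t) / (6 * Y t)) (at t)"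
proof -
  define v where "v = (1 - u t^4)^2 * (3 + u t^4) / (48 * a)"
  have u4: "u t^4 < 1" using u by (simp add: power_less_one_iff)
  have Z: "0 < a * u t / (1 - u t^4)" using a u u4 by simp
  show "0 < R t" "0 < Y t" using u4 Z by (simp_all add: R_def Y_def)
  have Y2: "Y t^2 = a * u t / (1 - u t^4)" using Z by (simp add: Y_def)
  have "(R has_real_derivative - (u t^3 * v)) (at t)"
    unfolding R_def by (rule derivative_eq_intros u'[folded v_def] refl)+ simp_all
  moreover have "- (u t^3 * v) = - R t * (1 - R t) * (1 - 4 * R t) / (3 * Y t^2)"
    unfolding Y2 R_def v_def using a u u4
    by (simp add: field_simps power2_eq_square power3_eq_cube power4_eq_xxxx)
  ultimately show "(R has_real_derivative - R t * (1 - R t) * (1 - 4 * R t) / (3 * Y t^2)) (at t)"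
    by (rule DERIV_cong)
  have "((\<lambda>t. a * u t / (1 - u t^4)) has_real_derivative a * v * (1 + 3 * u t^4) / (1 - u t^4)^2) (at t)"
    by (rule derivative_eq_intros u'[folded v_def] refl)+
       (use u4 in \<open>simp_all add: field_simps power2_eq_square power4_eq_xxxx power3_eq_cube\<close>)
  moreover have "a * v * (1 + 3 * u t^4) / (1 - u t^4)^2 = (1 + 3 * u t^4) * (3 + u t^4) / 48"
    using a u4 by (simp add: v_def field_simps)
  ultimately have "((\<lambda>t. a * u t / (1 - u t^4)) has_real_derivative (1 + 3 * u t^4) * (3 + u t^4) / 48) (at t)"
    by simp
  from DERIV_chain2[OF DERIV_real_sqrt[OF Z] this]
  have "(Y has_real_derivative inverse (Y t) / 2 * ((1 + 3 * u t^4) * (3 + u t^4) / 48)) (at t)"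
    by (simp add: Y_def)
  then show "(Y has_real_derivative (1 - R t) * (1 - 3 * R t) / (6 * Y t)) (at t)"
    by (rule DERIV_cong) (simp add: R_def field_simps)
qed

lemma quartic_deficit_bound:
  fixes v :: real
  assumes "0 \<le> v" "v \<le> 1"
  shows "(1 - v^4)^2 * (3 + v^4) \<le> 64 * (1 - v)^2"
proof -
  have v4: "v^4 \<le> 1" using assms by (simp add: power_le_one)
  have "1 - v^4 = (1 - v) * ((1 + v) * (1 + v^2))" by algebra
  also have "\<dots> \<le> (1 - v) * (2 * 2)"
    using assms power_le_one[of v 2] by (intro mult_left_mono mult_mono) auto
  finally have "(1 - v^4)^2 \<le> ((1 - v) * (2 * 2))^2"
    by (rule power_mono) (use v4 in simp)
  also have "\<dots> = 16 * (1 - v)^2" by algebra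
  finally have "(1 - v^4)^2 \<le> 16 * (1 - v)^2" .
  then show ?thesis
    using mult_mono[of "(1 - v^4)^2" "16 * (1 - v)^2" "3 + v^4" 4] v4 assms by simp
qed

lemma quartic_parameter_global_solution:
  fixes a u0 :: real
  assumes a: "0 < a" and u0: "0 < u0" "u0 < 1"
  obtains u where "u 0 = u0" "\<And>t. 0 \<le> t \<Longrightarrow> 0 < u t \<and> u t < 1 \<and>
    (u has_real_derivative (1 - u t^4)^2 * (3 + u t^4) / (48 * a)) (at t)"
proof (rule separable_ODE_global_solution[where f="\<lambda>v. (1 - v^4)^2 * (3 + v^4) / (48 * a)"
      and k="3 * a / 4", OF _ _ _ _ u0])
  show "continuous_on {0..<1} (\<lambda>v. (1 - v^4)^2 * (3 + v^4) / (48 * a))"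
    by (intro continuous_intros) (use a in simp)
  fix v :: real assume "0 \<le> v" "v < 1"
  moreover from this have "v^4 < 1" by (simp add: power_less_one_iff)
  ultimately show "0 < (1 - v^4)^2 * (3 + v^4) / (48 * a)" using a by (simp add: add_pos_nonneg)
  have "3 * a / 4 * ((1 - v^4)^2 * (3 + v^4) / (48 * a)) = (1 - v^4)^2 * (3 + v^4) / 64"
    using a by simp
  then show "3 * a / 4 * ((1 - v^4)^2 * (3 + v^4) / (48 * a)) \<le> (1 - v)^2"
    using quartic_deficit_bound[of v] \<open>0 \<le> v\<close> \<open>v < 1\<close> by simp
qed (use a that in auto)

lemma S3_symmetric_solution_exists:
  fixes h0 h1 h2 :: real
  assumes h: "0 < h0" "0 < h1" "0 < h2" "4 * h1 < h2"
  shows "\<exists>g0 g1 g2. S3_global_solution h0 h1 h2 h2 g0 g1 g2 g2"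
proof -
  define u0 where "u0 = root 4 (1 - 4 * h1 / h2)"
  have u0_4: "u0^4 = 1 - 4 * h1 / h2" using h by (simp add: u0_def)
  have u0: "0 < u0" "u0 < 1" using h by (auto simp: u0_def)
  define a where "a = 4 * h1 * h2 / u0"
  have a: "0 < a" using h u0 by (simp add: a_def)
  obtain u where u_0: "u 0 = u0"
    and u: "\<And>t. 0 \<le> t \<Longrightarrow> 0 < u t \<and> u t < 1 \<and>
      (u has_real_derivative (1 - u t^4)^2 * (3 + u t^4) / (48 * a)) (at t)"
    using quartic_parameter_global_solution[OF a u0] by blast
  define R where "R = (\<lambda>t. (1 - u t^4) / 4)"
  define Y where "Y = (\<lambda>t. sqrt (a * u t / (1 - u t^4)))"
  have "a * u0 / (1 - u0^4) = h2^2"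
    using h u0 by (simp add: u0_4 a_def field_simps power2_eq_square)
  then have Y0: "Y 0 = h2" using h by (simp add: Y_def u_0)
  have "R 0 = h1 / h2" by (simp add: R_def u_0 u0_4)
  then have R0: "R 0 * Y 0 = h1" using h by (simp add: Y0)
  have "S3_global_solution h0 h1 h2 h2
      (\<lambda>t. h0 * h1 * h2^2 / (R t * Y t^3)) (\<lambda>t. R t * Y t) Y Y"
  proof (rule S3_global_solution_from_ratio[where R=R and Y=Y, OF h(1-3) R0 Y0])
    fix t :: real assume "0 \<le> t"
    then have "0 < u t" "u t < 1"
      and u': "(u has_real_derivative (1 - u t^4)^2 * (3 + u t^4) / (48 * a)) (at t)"
      using u[of t] by auto
    note param = ratio_equations_from_quartic_parameter[OF a this R_def Y_def]
    show "0 < R t \<and> 0 < Y t" using param(1,2) ..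
    show "(R has_real_derivative - R t * (1 - R t) * (1 - 4 * R t) / (3 * Y t^2)) (at t within {0..})"
      using param(3) by (rule has_field_derivative_at_within)
    show "(Y has_real_derivative (1 - R t) * (1 - 3 * R t) / (6 * Y t)) (at t within {0..})"
      using param(4) by (rule has_field_derivative_at_within)
  qed
  then show ?thesis by blast
qed

theorem theorem5p19:
  fixes h0 h1 h2 h3 :: real
  assumes "h0 > 0" "h1 > 0" "h2 > 0" "h3 > 0"
    and "4 * h1 < h2" "h2 = h3"
  shows "(\<exists>g0 g1 g2 g3. S3_global_solution h0 h1 h2 h3 g0 g1 g2 g3) \<and>
         (\<forall>g0 g1 g2 g3. S3_global_solution h0 h1 h2 h3 g0 g1 g2 g3 \<longrightarrow>
            (\<forall>t\<ge>0. g2 t = g3 t) \<and>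
            strict_mono_on {0..} g2 \<and> strict_mono_on {0..} g3 \<and>
            (g0 \<longlongrightarrow> 0) at_top \<and> (g1 \<longlongrightarrow> 0) at_top \<and>
            filterlim g2 at_top at_top \<and> filterlim g3 at_top at_top \<and>
            (\<forall>t\<ge>0. (g0 t * (g2 t)^3 - 4 * detS3 h0 h1 h2 h3) * (g0 t)^3 * g2 t
                    = (h0 * h2^3 - 4 * detS3 h0 h1 h2 h3) * h0^3 * h2))"
proof (intro conjI allI impI)
  show "\<exists>g0 g1 g2 g3. S3_global_solution h0 h1 h2 h3 g0 g1 g2 g3"
    using S3_symmetric_solution_exists[of h0 h1 h2] assms by auto
next
  fix g0 g1 g2 g3 assume "S3_global_solution h0 h1 h2 h3 g0 g1 g2 g3"
  then interpret S3_expanding_solution h0 h1 h2 h3 g0 g1 g2 g3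
    using assms by unfold_locales auto
  show "g2 t = g3 t" if "0 \<le> t" for t using g3_eq_g2[OF that] by simp
  show "strict_mono_on {0..} g2" "strict_mono_on {0..} g3" by (fact strict_mono_g2 strict_mono_g3)+
  show "(g0 \<longlongrightarrow> 0) at_top" "(g1 \<longlongrightarrow> 0) at_top" by (fact g0_tendsto_zero g1_tendsto_zero)+
  show "filterlim g2 at_top at_top" "filterlim g3 at_top at_top"
    by (fact g2_tendsto_at_top g3_tendsto_at_top)+
  show "(g0 t * (g2 t)^3 - 4 * detS3 h0 h1 h2 h3) * (g0 t)^3 * g2 t
      = (h0 * h2^3 - 4 * detS3 h0 h1 h2 h3) * h0^3 * h2" if "0 \<le> t" for t
    using conserved_quantity[OF that] .
qed

end
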